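(* Let $(\Omega,\mathcal{F})$ be a measurable space and $\mu$ a continuous capacity on $\mathcal{F}$. Let $\{Y_n\}_{n\in\mathbb{N}}$ be real-valued random variables on $(\Omega,\mathcal{F})$ such that for every $n\in\mathbb{N}$ the $\sigma$-algebras $\sigma(Y_k,\ k\le n)$ and $\sigma(Y_k,\ k\ge n+1)$ are independent with respect to $\mu$. Let $\mathcal{T}=\bigcap_{n=1}^{\infty}\sigma(Y_k,\ k\ge n)$ be the tail $\sigma$-algebra. Then for every $A\in\mathcal{T}$: (i) $\mu(A)=0$ or $\mu(A)=1$; and (ii) $\mu(A)=0$ or $\mu(A^c)=0$.
   Context: A capacity on $\mathcal{F}$ is a set function $\mu:\mathcal{F}\to[0,1]$ with $\mu(\emptyset)=0$, $\mu(\Omega)=1$ and $\mu(A)\le\mu(B)$ whenever $A\subseteq B$. It is continuous from below if $\mu(A_n)\to\mu(A)$ whenever $A_n\uparrow A$, continuous from above if $\mu(A_n)\to\mu(A)$ whenever $A_n\downarrow A$, and continuous if both hold. Two subclasses $\mathcal{D}_1,\mathcal{D}_2\subseteq\mathcal{F}$ are independent with respect to $\mu$ if $\mu(A_1\cap A_2)=\mu(A_1)\mu(A_2)$ for all $A_1\in\mathcal{D}_1$, $A_2\in\mathcal{D}_2$. *)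

theory Defs
  imports "HOL-Analysis.Analysis"
begin

definition capacity :: "'a measure \<Rightarrow> ('a set \<Rightarrow> real) \<Rightarrow> bool" where
  "capacity M \<mu> \<longleftrightarrow>
     (\<forall>A\<in>sets M. 0 \<le> \<mu> A \<and> \<mu> A \<le> 1) \<and>
     \<mu> {} = 0 \<and> \<mu> (space M) = 1 \<and>
     (\<forall>A\<in>sets M. \<forall>B\<in>sets M. A \<subseteq> B \<longrightarrow> \<mu> A \<le> \<mu> B)"

definition cont_below :: "'a measure \<Rightarrow> ('a set \<Rightarrow> real) \<Rightarrow> bool" where
  "cont_below M \<mu> \<longleftrightarrow>
     (\<forall>A :: nat \<Rightarrow> 'a set. range A \<subseteq> sets M \<longrightarrow> incseq A \<longrightarrow>
        (\<lambda>n. \<mu> (A n)) \<longlonglongrightarrow> \<mu> (\<Union>n. A n))"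

definition cont_above :: "'a measure \<Rightarrow> ('a set \<Rightarrow> real) \<Rightarrow> bool" where
  "cont_above M \<mu> \<longleftrightarrow>
     (\<forall>A :: nat \<Rightarrow> 'a set. range A \<subseteq> sets M \<longrightarrow> decseq A \<longrightarrow>
        (\<lambda>n. \<mu> (A n)) \<longlonglongrightarrow> \<mu> (\<Inter>n. A n))"

definition continuous_capacity :: "'a measure \<Rightarrow> ('a set \<Rightarrow> real) \<Rightarrow> bool" where
  "continuous_capacity M \<mu> \<longleftrightarrow> capacity M \<mu> \<and> cont_below M \<mu> \<and> cont_above M \<mu>"

definition cap_indep :: "('a set \<Rightarrow> real) \<Rightarrow> 'a set set \<Rightarrow> 'a set set \<Rightarrow> bool" where
  "cap_indep \<mu> D1 D2 \<longleftrightarrow> (\<forall>A1\<in>D1. \<forall>A2\<in>D2. \<mu> (A1 \<inter> A2) = \<mu> A1 * \<mu> A2)"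

definition gen_sigma :: "'a measure \<Rightarrow> (nat \<Rightarrow> 'a \<Rightarrow> real) \<Rightarrow> nat set \<Rightarrow> 'a set set" where
  "gen_sigma M Y K = sigma_sets (space M)
      (\<Union>k\<in>K. {Y k -` B \<inter> space M | B. B \<in> sets borel})"

definition tail_sigma :: "'a measure \<Rightarrow> (nat \<Rightarrow> 'a \<Rightarrow> real) \<Rightarrow> 'a set set" where
  "tail_sigma M Y = (\<Inter>n. gen_sigma M Y {n..})"

end

theory Submission
  imports Defs
begin

text \<open>
  The events determined by finitely many \<open>Y\<^sub>k\<close> form an algebra \<open>U\<close>, and a tail event \<open>A\<close>
  is independent of each of them, because an event of \<open>\<sigma>(Y\<^sub>k, k \<le> n)\<close> is independent of
  \<open>\<sigma>(Y\<^sub>k, k \<ge> n + 1) \<ni> A\<close>. By continuity of \<open>\<mu>\<close>, the events \<open>B\<close> with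
  \<open>\<mu>(B \<inter> A) = \<mu>(B) \<mu>(A)\<close> form a monotone class, so by the monotone class theorem they
  include \<open>\<sigma>(U)\<close>, which contains \<open>A\<close> and its complement. Hence \<open>\<mu>(A) = \<mu>(A)\<^sup>2\<close> and
  \<open>\<mu>(A\<^sup>c) \<mu>(A) = \<mu>(\<emptyset>) = 0\<close>.
  A capacity is not additive, so the Dynkin-system argument behind Kolmogorov's 0-1 law
  for probability measures is not available; the monotone class theorem only needs
  continuity.
\<close>

inductive_set monotone_closure :: "'a set set \<Rightarrow> 'a set set" for U where
  basic: "a \<in> U \<Longrightarrow> a \<in> monotone_closure U"
| incseq_UN: "(\<And>i. A i \<in> monotone_closure U) \<Longrightarrow> incseq A \<Longrightarrow>
    (\<Union>i::nat. A i) \<in> monotone_closure U"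
| decseq_INT: "(\<And>i. A i \<in> monotone_closure U) \<Longrightarrow> decseq A \<Longrightarrow>
    (\<Inter>i::nat. A i) \<in> monotone_closure U"

lemma monotone_closure_compl:
  assumes "algebra \<Omega> U" "b \<in> monotone_closure U"
  shows "\<Omega> - b \<in> monotone_closure U"
  using assms(2)
proof induct
  case (basic a)
  then show ?case using assms(1) by (simp add: algebra.compl_sets monotone_closure.basic)
next
  case (incseq_UN A)
  have "\<Omega> - (\<Union>i. A i) = (\<Inter>i. \<Omega> - A i)" by auto
  moreover have "decseq (\<lambda>i. \<Omega> - A i)" using incseq_UN(3) by (auto simp: incseq_def decseq_def)
  ultimately show ?case using incseq_UN(2) by (metis monotone_closure.decseq_INT)
next
  case (decseq_INT A)
  have "\<Omega> - (\<Inter>i. A i) = (\<Union>i. \<Omega> - A i)" by auto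
  moreover have "incseq (\<lambda>i. \<Omega> - A i)" using decseq_INT(3) by (auto simp: incseq_def decseq_def)
  ultimately show ?case using decseq_INT(2) by (metis monotone_closure.incseq_UN)
qed

lemma monotone_closure_Un_generator:
  assumes "algebra \<Omega> U" "a \<in> U" "b \<in> monotone_closure U"
  shows "a \<union> b \<in> monotone_closure U"
  using assms(3)
proof induct
  case (basic c)
  then show ?case using assms by (auto simp: algebra_iff_Un intro: monotone_closure.basic)
next
  case (incseq_UN A)
  have "a \<union> (\<Union>i. A i) = (\<Union>i. a \<union> A i)" by auto
  moreover have "incseq (\<lambda>i. a \<union> A i)" using incseq_UN(3) by (auto simp: incseq_def)
  ultimately show ?case using incseq_UN(2) by (metis monotone_closure.incseq_UN)
next
  case (decseq_INT A)
  have "a \<union> (\<Inter>i. A i) = (\<Inter>i. a \<union> A i)" by auto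
  moreover have "decseq (\<lambda>i. a \<union> A i)" using decseq_INT(3) by (auto simp: decseq_def)
  ultimately show ?case using decseq_INT(2) by (metis monotone_closure.decseq_INT)
qed

lemma monotone_closure_Un:
  assumes "algebra \<Omega> U" "a \<in> monotone_closure U" "b \<in> monotone_closure U"
  shows "a \<union> b \<in> monotone_closure U"
  using assms(2)
proof induct
  case (basic c)
  then show ?case using assms monotone_closure_Un_generator by blast
next
  case (incseq_UN A)
  have "(\<Union>i. A i) \<union> b = (\<Union>i. A i \<union> b)" by auto
  moreover have "incseq (\<lambda>i. A i \<union> b)" using incseq_UN(3) by (auto simp: incseq_def)
  ultimately show ?case using incseq_UN(2) by (metis monotone_closure.incseq_UN)
next
  case (decseq_INT A)
  have "(\<Inter>i. A i) \<union> b = (\<Inter>i. A i \<union> b)" by auto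
  moreover have "decseq (\<lambda>i. A i \<union> b)" using decseq_INT(3) by (auto simp: decseq_def)
  ultimately show ?case using decseq_INT(2) by (metis monotone_closure.decseq_INT)
qed

lemma monotone_closure_UN:
  assumes "algebra \<Omega> U" "\<And>i. A i \<in> monotone_closure U"
  shows "(\<Union>i::nat. A i) \<in> monotone_closure U"
proof -
  have partial_unions: "(\<Union>i\<le>n. A i) \<in> monotone_closure U" for n
  proof (induct n)
    case 0
    then show ?case using assms by simp
  next
    case (Suc n)
    have "(\<Union>i\<le>Suc n. A i) = (\<Union>i\<le>n. A i) \<union> A (Suc n)" by (auto simp: atMost_Suc)
    then show ?case using Suc assms monotone_closure_Un by metis
  qed
  have "(\<Union>i. A i) = (\<Union>n. \<Union>i\<le>n. A i)" by auto
  moreover have "incseq (\<lambda>n. \<Union>i\<le>n. A i)" by (rule incseq_SucI) (auto simp: atMost_Suc)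
  ultimately show ?thesis using partial_unions by (metis monotone_closure.incseq_UN)
qed

lemma sigma_sets_subset_monotone_closure:
  assumes "algebra \<Omega> U"
  shows "sigma_sets \<Omega> U \<subseteq> monotone_closure U"
proof
  fix x assume "x \<in> sigma_sets \<Omega> U"
  then show "x \<in> monotone_closure U"
  proof induct
    case (Basic a)
    then show ?case by (rule monotone_closure.basic)
  next
    case Empty
    then show ?case using assms by (auto simp: algebra_iff_Un intro: monotone_closure.basic)
  next
    case (Compl a)
    then show ?case using assms monotone_closure_compl by blast
  next
    case (Union a)
    then show ?case using assms monotone_closure_UN by blast
  qed
qed

theorem sigma_sets_subset_monotone_class:
  assumes "algebra \<Omega> U" "U \<subseteq> C"
    and "\<And>A. range A \<subseteq> C \<Longrightarrow> incseq A \<Longrightarrow> (\<Union>i::nat. A i) \<in> C"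
    and "\<And>A. range A \<subseteq> C \<Longrightarrow> decseq A \<Longrightarrow> (\<Inter>i::nat. A i) \<in> C"
  shows "sigma_sets \<Omega> U \<subseteq> C"
proof -
  have "monotone_closure U \<subseteq> C"
  proof
    fix x assume "x \<in> monotone_closure U"
    then show "x \<in> C" by induct (use assms in blast)+
  qed
  then show ?thesis using sigma_sets_subset_monotone_closure[OF assms(1)] by blast
qed

lemma algebra_UN_incseq:
  assumes "\<And>n. algebra \<Omega> (F n)" "incseq F"
  shows "algebra \<Omega> (\<Union>n::nat. F n)"
  unfolding algebra_iff_Un
proof (intro conjI ballI)
  have "F n \<subseteq> Pow \<Omega>" "{} \<in> F n" for n
    using assms(1)[of n] by (simp_all add: algebra_iff_Un)
  then show "(\<Union>n. F n) \<subseteq> Pow \<Omega>" "{} \<in> (\<Union>n. F n)" by blast+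
next
  fix a assume "a \<in> (\<Union>n. F n)"
  then show "\<Omega> - a \<in> (\<Union>n. F n)" using assms(1) by (auto simp: algebra_iff_Un)
next
  fix a b assume "a \<in> (\<Union>n. F n)" "b \<in> (\<Union>n. F n)"
  then obtain n m where "a \<in> F n" "b \<in> F m" by blast
  then have "a \<in> F (max n m)" "b \<in> F (max n m)"
    using assms(2) by (auto dest: monoD[of F n "max n m"] monoD[of F m "max n m"])
  then have "a \<union> b \<in> F (max n m)" using assms(1) by (simp add: algebra_iff_Un)
  then show "a \<union> b \<in> (\<Union>n. F n)" by blast
qed

lemma cont_belowD:
  "cont_below M \<mu> \<Longrightarrow> range A \<subseteq> sets M \<Longrightarrow> incseq A \<Longrightarrow>
    (\<lambda>n. \<mu> (A n)) \<longlonglongrightarrow> \<mu> (\<Union>n. A n)"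
  unfolding cont_below_def by blast

lemma cont_aboveD:
  "cont_above M \<mu> \<Longrightarrow> range A \<subseteq> sets M \<Longrightarrow> decseq A \<Longrightarrow>
    (\<lambda>n. \<mu> (A n)) \<longlonglongrightarrow> \<mu> (\<Inter>n. A n)"
  unfolding cont_above_def by blast

lemma cap_indep_sigma_sets:
  assumes "continuous_capacity M \<mu>" "algebra (space M) U" "U \<subseteq> sets M" "A \<in> sets M"
    and "cap_indep \<mu> U {A}"
  shows "cap_indep \<mu> (sigma_sets (space M) U) {A}"
proof -
  define C where "C = {B \<in> sets M. \<mu> (B \<inter> A) = \<mu> B * \<mu> A}"
  have below: "cont_below M \<mu>" and above: "cont_above M \<mu>"
    using assms(1) by (auto simp: continuous_capacity_def)
  have limit: "\<mu> (L \<inter> A) = \<mu> L * \<mu> A"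
    if "(\<lambda>i. \<mu> (B i)) \<longlonglongrightarrow> \<mu> L" "(\<lambda>i. \<mu> (B i \<inter> A)) \<longlonglongrightarrow> \<mu> (L \<inter> A)"
      and "range B \<subseteq> C" for B :: "nat \<Rightarrow> _" and L
  proof -
    have "(\<lambda>i. \<mu> (B i \<inter> A)) \<longlonglongrightarrow> \<mu> L * \<mu> A"
      using tendsto_mult_right[OF that(1)] that(3) by (simp add: C_def image_subset_iff)
    then show ?thesis using that(2) LIMSEQ_unique by blast
  qed
  have "sigma_sets (space M) U \<subseteq> C"
  proof (rule sigma_sets_subset_monotone_class[OF assms(2)])
    show "U \<subseteq> C" using assms(3,5) by (auto simp: C_def cap_indep_def)
  next
    fix B :: "nat \<Rightarrow> _" assume B: "range B \<subseteq> C" "incseq B"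
    then have events: "range B \<subseteq> sets M" "range (\<lambda>i. B i \<inter> A) \<subseteq> sets M"
      using assms(4) by (auto simp: C_def)
    have "incseq (\<lambda>i. B i \<inter> A)" using B(2) by (auto simp: incseq_def)
    then have "(\<lambda>i. \<mu> (B i \<inter> A)) \<longlonglongrightarrow> \<mu> ((\<Union>i. B i) \<inter> A)"
      using cont_belowD[OF below events(2)] by simp
    with limit[OF cont_belowD[OF below events(1) B(2)]] B(1) events(1)
    show "(\<Union>i. B i) \<in> C" by (auto simp: C_def)
  next
    fix B :: "nat \<Rightarrow> _" assume B: "range B \<subseteq> C" "decseq B"
    then have events: "range B \<subseteq> sets M" "range (\<lambda>i. B i \<inter> A) \<subseteq> sets M"
      using assms(4) by (auto simp: C_def)
    have "decseq (\<lambda>i. B i \<inter> A)" using B(2) by (auto simp: decseq_def)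
    then have "(\<lambda>i. \<mu> (B i \<inter> A)) \<longlonglongrightarrow> \<mu> ((\<Inter>i. B i) \<inter> A)"
      using cont_aboveD[OF above events(2)] by simp
    with limit[OF cont_aboveD[OF above events(1) B(2)]] B(1) events(1)
    show "(\<Inter>i. B i) \<in> C" by (auto simp: C_def)
  qed
  then show ?thesis by (auto simp: C_def cap_indep_def)
qed

lemma gen_sigma_subset_sets:
  "(\<And>k. Y k \<in> borel_measurable M) \<Longrightarrow> gen_sigma M Y K \<subseteq> sets M"
  unfolding gen_sigma_def by (rule sets.sigma_sets_subset) (auto simp: measurable_sets)

lemma sigma_algebra_gen_sigma: "sigma_algebra (space M) (gen_sigma M Y K)"
  unfolding gen_sigma_def by (rule sigma_algebra_sigma_sets) auto

lemma gen_sigma_mono: "K \<subseteq> L \<Longrightarrow> gen_sigma M Y K \<subseteq> gen_sigma M Y L"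
  unfolding gen_sigma_def by (rule sigma_sets_subseteq) blast

lemma gen_sigma_subset_sigma_sets_UN_atMost:
  "gen_sigma M Y K \<subseteq> sigma_sets (space M) (\<Union>n. gen_sigma M Y {..n})"
  unfolding gen_sigma_def[of M Y K]
proof (rule sigma_sets_subseteq, safe)
  fix k and B :: "real set" assume "k \<in> K" "B \<in> sets borel"
  then have "Y k -` B \<inter> space M \<in> gen_sigma M Y {..k}"
    unfolding gen_sigma_def by (auto intro: sigma_sets.Basic)
  then show "Y k -` B \<inter> space M \<in> (\<Union>n. gen_sigma M Y {..n})" by blast
qed

lemma tail_sigma_cap_indep_gen_sigma:
  assumes "continuous_capacity M \<mu>"
    and "\<And>n. Y n \<in> borel_measurable M"
    and "\<And>n. cap_indep \<mu> (gen_sigma M Y {..n}) (gen_sigma M Y {n+1..})"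
    and "A \<in> tail_sigma M Y"
  shows "cap_indep \<mu> (gen_sigma M Y K) {A}"
proof -
  define U where "U = (\<Union>n. gen_sigma M Y {..n})"
  have tail: "A \<in> gen_sigma M Y {n..}" for n using assms(4) by (auto simp: tail_sigma_def)
  have "algebra (space M) U"
    unfolding U_def
  proof (rule algebra_UN_incseq)
    show "algebra (space M) (gen_sigma M Y {..n})" for n
      using sigma_algebra_gen_sigma by (rule sigma_algebra.axioms(1))
    show "incseq (\<lambda>n. gen_sigma M Y {..n})"
      by (rule monoI, rule gen_sigma_mono) auto
  qed
  moreover have "U \<subseteq> sets M" "A \<in> sets M"
    unfolding U_def using gen_sigma_subset_sets[of Y M] assms(2) tail by blast+
  moreover have "cap_indep \<mu> U {A}"
    using assms(3) tail unfolding U_def cap_indep_def by blast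
  ultimately have "cap_indep \<mu> (sigma_sets (space M) U) {A}"
    by (rule cap_indep_sigma_sets[OF assms(1)])
  then show ?thesis
    using gen_sigma_subset_sigma_sets_UN_atMost unfolding U_def cap_indep_def by blast
qed

theorem theorem1:
  fixes M :: "'a measure" and \<mu> :: "'a set \<Rightarrow> real" and Y :: "nat \<Rightarrow> 'a \<Rightarrow> real"
  assumes "continuous_capacity M \<mu>"
    and "\<And>n. Y n \<in> borel_measurable M"
    and "\<And>n. cap_indep \<mu> (gen_sigma M Y {..n}) (gen_sigma M Y {n+1..})"
    and "A \<in> tail_sigma M Y"
  shows "(\<mu> A = 0 \<or> \<mu> A = 1) \<and> (\<mu> A = 0 \<or> \<mu> (space M - A) = 0)"
proof -
  have indep: "cap_indep \<mu> (gen_sigma M Y UNIV) {A}"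
    using tail_sigma_cap_indep_gen_sigma[OF assms] .
  have "A \<in> gen_sigma M Y {0..}" using assms(4) unfolding tail_sigma_def by blast
  then have A: "A \<in> gen_sigma M Y UNIV" by simp
  then have "space M - A \<in> gen_sigma M Y UNIV"
    unfolding gen_sigma_def by (rule sigma_sets.Compl)
  then have "\<mu> ((space M - A) \<inter> A) = \<mu> (space M - A) * \<mu> A"
    using indep unfolding cap_indep_def by blast
  moreover have "\<mu> (A \<inter> A) = \<mu> A * \<mu> A"
    using A indep unfolding cap_indep_def by blast
  moreover have "(space M - A) \<inter> A = {}" by blast
  moreover have "\<mu> {} = 0"
    using assms(1) by (simp add: continuous_capacity_def capacity_def)
  ultimately show ?thesis by auto
qed

end
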